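(* Let $\vartheta>0$ and $\gamma\in\mathbb R$ be fixed, let $\rho=1-\gamma/\sqrt s$, and let $F_s(\rho)=\sum_{n=0}^\infty p_s(0)\cdots p_s(n)\rho^{n+1}$ with $p_s(k)=\bigl(1+(k+1)\tfrac\vartheta s\bigr)^{-1}$, $k\in\mathbb N_0$. Then as $s\to\infty$, $F_s(\rho)\sim\Bigl(\frac2\vartheta\Bigr)^{1/2}\chi(\gamma/\sqrt{2\vartheta})\sqrt s+\frac{\gamma^3\sqrt2}{3\vartheta^{3/2}}\chi(\gamma/\sqrt{2\vartheta})-\frac{\gamma^2}{3\vartheta}-\frac23$, in the sense that the difference between the two sides tends to $0$.
   Context: $\chi$ denotes Mills' ratio, $\chi(\delta)=e^{\delta^2}\int_\delta^\infty e^{-y^2}dy$ for $\delta\in\mathbb R$. *)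

theory Defs
  imports "HOL-Analysis.Analysis"
begin

definition mills_ratio :: "real \<Rightarrow> real" where
  "mills_ratio \<delta> = exp (\<delta>\<^sup>2) * integral {\<delta>..} (\<lambda>y. exp (- (y\<^sup>2)))"

definition p_s :: "real \<Rightarrow> real \<Rightarrow> nat \<Rightarrow> real" where
  "p_s \<theta> s k = inverse (1 + (real k + 1) * \<theta> / s)"

definition F_s :: "real \<Rightarrow> real \<Rightarrow> real \<Rightarrow> real" where
  "F_s \<theta> s \<rho> = (\<Sum>n. (\<Prod>k\<le>n. p_s \<theta> s k) * \<rho> ^ (n + 1))"

end

theory Submission
  imports Defs
begin

text \<open>
  With \<open>a = s/\<theta>\<close> the factors are \<open>p_s(k) = a/(a + k + 1)\<close>, so the terms of \<open>F_s\<close> are Beta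
  integrals, and summing the exponential series under the integral sign gives
  \<open>F_s(\<rho>) + 1 = a \<integral>\<^sub>0\<^sup>1 u\<^bsup>a-1\<^esup> exp (a\<rho>(1 - u)) du\<close>.
  Put \<open>h = 1/\<surd>a\<close> and \<open>c = \<gamma>/\<surd>\<theta>\<close>, so that \<open>\<rho> = 1 - c h\<close>, and substitute \<open>u = 1 - h y\<close>:
  \<open>F_s(\<rho>) + 1 = h\<^sup>-\<^sup>1 \<integral>\<^sub>0\<^bsup>1/h\<^esup> (1 - h y)\<^bsup>1/h\<^sup>2 - 1\<^esup> exp ((1 - c h) y / h) dy\<close>.
  The logarithm of this kernel is \<open>-(y\<^sup>2/2 + c y) + h (y - y\<^sup>3/3) + O(h\<^sup>2)\<close>, and the kernel has a
  Gaussian bound uniform in small \<open>h\<close>. Subtracting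
  \<open>h\<^sup>-\<^sup>1 \<integral>\<^sub>0\<^sup>\<infinity> exp (-(y\<^sup>2/2 + c y)) dy = h\<^sup>-\<^sup>1 \<surd>2 \<chi>(c/\<surd>2)\<close>, dominated convergence shows that
  the remainder tends to \<open>\<integral>\<^sub>0\<^sup>\<infinity> exp (-(y\<^sup>2/2 + c y)) (y - y\<^sup>3/3) dy\<close>, which an explicit
  antiderivative evaluates to \<open>(1 - c\<^sup>2)/3 + c\<^sup>3/3 \<surd>2 \<chi>(c/\<surd>2)\<close>.
\<close>

lemma ln_one_minus_le:
  fixes z :: real
  assumes "0 \<le> z" "z < 1"
  shows "ln (1 - z) \<le> - z - z\<^sup>2 / 2"
proof -
  let ?f = "\<lambda>z::real. ln (1 - z) + z + z\<^sup>2 / 2"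
  have "?f z \<le> ?f 0"
  proof (rule DERIV_nonpos_imp_nonincreasing[OF assms(1)])
    fix x assume x: "0 \<le> x" "x \<le> z"
    with assms have "x < 1" by linarith
    with x show "\<exists>y. (?f has_real_derivative y) (at x) \<and> y \<le> 0"
      by (intro exI[of _ "- x\<^sup>2 / (1 - x)"])
         (auto intro!: derivative_eq_intros simp: field_simps power2_eq_square)
  qed
  then show ?thesis by simp
qed

lemma abs_ln_one_minus_taylor3_le:
  fixes z :: real
  assumes "0 \<le> z" "z \<le> 1/2"
  shows "\<bar>ln (1 - z) + z + z\<^sup>2 / 2 + z ^ 3 / 3\<bar> \<le> z ^ 4"
proof -
  let ?f = "\<lambda>z::real. ln (1 - z) + z + z\<^sup>2 / 2 + z ^ 3 / 3"
  have "?f z \<le> ?f 0"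
  proof (rule DERIV_nonpos_imp_nonincreasing[OF assms(1)])
    fix x assume x: "0 \<le> x" "x \<le> z"
    with assms have "x < 1" by linarith
    with x show "\<exists>y. (?f has_real_derivative y) (at x) \<and> y \<le> 0"
      by (intro exI[of _ "- (x ^ 3) / (1 - x)"])
         (auto intro!: derivative_eq_intros simp: field_simps power2_eq_square power3_eq_cube)
  qed
  moreover have "?f 0 + 0 ^ 4 \<le> ?f z + z ^ 4"
  proof (rule DERIV_nonneg_imp_nondecreasing[OF assms(1)])
    fix x assume x: "0 \<le> x" "x \<le> z"
    with assms have "x \<le> 1/2" by linarith
    then have "1 / (1 - x) \<le> 2" by (simp add: field_simps)
    with x have "x ^ 3 * (4 - 1 / (1 - x)) \<ge> 0" by simp
    moreover have "((\<lambda>z. ?f z + z ^ 4) has_real_derivative x ^ 3 * (4 - 1 / (1 - x))) (at x)"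
      using \<open>x \<le> 1/2\<close> by (auto intro!: derivative_eq_intros
          simp: field_simps power2_eq_square power3_eq_cube eval_nat_numeral)
    ultimately show "\<exists>y. ((\<lambda>z. ?f z + z ^ 4) has_real_derivative y) (at x) \<and> y \<ge> 0"
      by blast
  qed
  ultimately show ?thesis by simp
qed

lemma abs_ln_one_minus_taylor2_le:
  fixes z :: real
  assumes "0 \<le> z" "z \<le> 1/2"
  shows "\<bar>ln (1 - z) + z + z\<^sup>2 / 2\<bar> \<le> z ^ 3"
proof -
  have "z ^ 4 \<le> z ^ 3 / 2"
    using assms mult_left_mono[of z "1/2" "z ^ 3"] by (simp add: eval_nat_numeral)
  moreover have "z ^ 3 \<ge> 0" using assms by simp
  ultimately show ?thesis using abs_ln_one_minus_taylor3_le[OF assms] by auto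
qed

lemma abs_exp_diff_le:
  fixes A B :: real
  shows "\<bar>exp A - exp B\<bar> \<le> \<bar>A - B\<bar> * exp (max A B)"
proof -
  have *: "exp Y - exp X \<le> (Y - X) * exp Y" if "X \<le> Y" for X Y :: real
  proof -
    have "1 - (Y - X) \<le> exp (X - Y)"
      using exp_ge_add_one_self[of "X - Y"] by linarith
    then have "exp Y * (1 - (Y - X)) \<le> exp Y * exp (X - Y)"
      by (intro mult_left_mono) auto
    then show ?thesis by (simp add: exp_diff algebra_simps)
  qed
  show ?thesis
    using *[of A B] *[of B A] by (cases "A \<le> B") (auto simp: max_def abs_if)
qed

lemma abs_exp_minus_one_minus_le:
  fixes w :: real
  assumes "\<bar>w\<bar> \<le> 1"
  shows "\<bar>exp w - 1 - w\<bar> \<le> w\<^sup>2"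
proof -
  have "exp w \<le> 1 + w + w\<^sup>2"
  proof (cases "w \<ge> 0")
    case True
    then show ?thesis using exp_bound[of w] assms by auto
  next
    case False
    have "exp w = 1 / exp (- w)" by (simp add: exp_minus field_simps)
    also have "\<dots> \<le> 1 / (1 - w)"
      using exp_ge_add_one_self[of "- w"] False by (intro divide_left_mono) auto
    also have "\<dots> \<le> 1 + w + w\<^sup>2"
      using False by (simp add: field_simps power2_eq_square mult_nonneg_nonpos2)
    finally show ?thesis .
  qed
  then show ?thesis
    using exp_ge_add_one_self[of w] zero_le_power2[of w] unfolding abs_le_iff by linarith
qed

section \<open>Integrals over half-lines\<close>

lemma exp_decay_bound:
  fixes f :: "real \<Rightarrow> real"
  assumes cont: "continuous_on {a..} f" and decay: "((\<lambda>x. f x * exp x) \<longlongrightarrow> 0) at_top"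
  obtains K where "\<And>x. x \<ge> a \<Longrightarrow> \<bar>f x\<bar> \<le> K * exp (- x)"
proof -
  obtain T where T: "\<And>x. x \<ge> T \<Longrightarrow> \<bar>f x * exp x\<bar> < 1"
    using order_tendstoD(2)[OF tendsto_rabs_zero[OF decay], of 1]
    by (auto simp: eventually_at_top_linorder)
  have "compact ((\<lambda>x. f x * exp x) ` {a..max a T})"
    by (intro compact_continuous_image continuous_intros continuous_on_subset[OF cont]) auto
  then obtain B where B: "\<And>x. x \<in> {a..max a T} \<Longrightarrow> \<bar>f x * exp x\<bar> \<le> B"
    by (fastforce dest!: compact_imp_bounded simp: bounded_real)
  have "\<bar>f x\<bar> \<le> max 1 B * exp (- x)" if "x \<ge> a" for x
  proof -
    have "\<bar>f x * exp x\<bar> \<le> max 1 B"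
      using T[of x] B[of x] that by (cases "x \<le> max a T") force+
    then show ?thesis by (simp add: abs_mult exp_minus field_simps)
  qed
  then show ?thesis by (rule that)
qed

lemma absolutely_integrable_on_Ici_exp_decay:
  fixes f :: "real \<Rightarrow> real"
  assumes cont: "continuous_on {a..} f" and decay: "((\<lambda>x. f x * exp x) \<longlongrightarrow> 0) at_top"
  shows "f absolutely_integrable_on {a..}"
proof -
  obtain K where K: "\<And>x. x \<ge> a \<Longrightarrow> \<bar>f x\<bar> \<le> K * exp (- x)"
    using exp_decay_bound[OF cont decay] by blast
  have g: "(\<lambda>x. K * exp (- 1 * x)) integrable_on {a..}"
    by (intro integrable_on_mult_right integrable_on_exp_minus_to_infinity) simp
  have "f integrable_on {a..}"
  proof (rule integrable_on_all_intervals_integrable_bound[OF _ _ g])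
    fix u v :: real
    have "{a..} \<inter> cbox u v = {max a u..v}" by auto
    moreover have "f integrable_on {max a u..v}"
      by (intro integrable_continuous_interval continuous_on_subset[OF cont]) auto
    ultimately show "(\<lambda>x. if x \<in> {a..} then f x else 0) integrable_on cbox u v"
      unfolding integrable_restrict_Int by simp
  qed (use K in auto)
  with K show ?thesis
    by (intro absolutely_integrable_integrable_bound[OF _ _ g]) auto
qed

lemma tendsto_integral_Icc_Ici:
  fixes f :: "real \<Rightarrow> real"
  assumes f: "f absolutely_integrable_on {a..}"
  shows "((\<lambda>T. integral {a..T} f) \<longlongrightarrow> integral {a..} f) at_top"
proof (rule tendsto_at_topI_sequentially)
  fix X :: "nat \<Rightarrow> real"
  assume X: "filterlim X at_top sequentially"
  define f' where "f' n x = (if x \<in> {..X n} then f x else 0)" for n x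
  have fi: "f integrable_on {a..}"
    using f by (simp add: absolutely_integrable_on_def)
  have Int: "{..X n} \<inter> {a..} = {a..X n}" for n by auto
  have f': "f' n integrable_on {a..}" for n
    unfolding f'_def integrable_restrict_Int Int by (rule integrable_on_subinterval[OF fi]) auto
  have int_f': "integral {a..} (f' n) = integral {a..X n} f" for n
    unfolding f'_def integral_restrict_Int Int by simp
  have "(\<lambda>n. integral {a..} (f' n)) \<longlonglongrightarrow> integral {a..} f"
  proof (rule dominated_convergence(2)[OF f'])
    show "(\<lambda>x. norm (f x)) integrable_on {a..}"
      using f by (simp add: absolutely_integrable_on_def)
    show "norm (f' n x) \<le> norm (f x)" for n x by (simp add: f'_def)
    fix x :: real
    have "eventually (\<lambda>n. f' n x = f x) sequentially"
      using filterlim_at_top[THEN iffD1, OF X, rule_format, of x]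
      by eventually_elim (simp add: f'_def)
    then show "(\<lambda>n. f' n x) \<longlonglongrightarrow> f x" by (rule tendsto_eventually)
  qed
  then show "(\<lambda>n. integral {a..X n} f) \<longlonglongrightarrow> integral {a..} f" by (simp add: int_f')
qed

lemma has_integral_Ici_fundamental:
  fixes f F :: "real \<Rightarrow> real"
  assumes f: "f absolutely_integrable_on {a..}"
    and deriv: "\<And>x. x \<ge> a \<Longrightarrow> (F has_real_derivative f x) (at x)"
    and lim: "(F \<longlongrightarrow> L) at_top"
  shows "(f has_integral (L - F a)) {a..}"
proof -
  have "eventually (\<lambda>T. F T - F a = integral {a..T} f) at_top"
    using eventually_ge_at_top[of a]
  proof eventually_elim
    case (elim T)
    then have "(f has_integral (F T - F a)) {a..T}"
      by (intro fundamental_theorem_of_calculus)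
         (auto intro!: has_field_derivative_at_within deriv
               simp flip: has_real_derivative_iff_has_vector_derivative)
    then show ?case by (simp add: integral_unique)
  qed
  then have "((\<lambda>T. integral {a..T} f) \<longlongrightarrow> L - F a) at_top"
    by (rule Lim_transform_eventually[rotated]) (intro tendsto_intros lim)
  then have "integral {a..} f = L - F a"
    using tendsto_unique[OF trivial_limit_at_top_linorder tendsto_integral_Icc_Ici[OF f]] by blast
  then show ?thesis
    using f by (metis absolutely_integrable_on_def has_integral_integral)
qed

section \<open>An integral representation of \<open>F_s\<close>\<close>

lemma Beta_real_Suc:
  fixes a :: real
  assumes "a > 0"
  shows "Beta a (real n + 1) = fact n / pochhammer a (Suc n)"
proof -
  have "a \<notin> \<int>\<^sub>\<le>\<^sub>0" using assms by (auto elim!: nonpos_Ints_cases)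
  then show ?thesis
    using Gamma_fact[where 'a = real, of n] pochhammer_Gamma[of a "Suc n"] assms
    by (simp add: Beta_def add_ac)
qed

lemma has_integral_powr_times_power:
  fixes a :: real
  assumes "a > 0"
  shows "((\<lambda>t. t powr (a - 1) * (1 - t) ^ n) has_integral fact n / pochhammer a (Suc n)) {0..1}"
proof -
  have "((\<lambda>t. t powr (a - 1) * (1 - t) powr real n) has_integral Beta a (real n + 1)) {0<..<1}"
    using has_integral_Beta_real[of a "real n + 1"] assms by (simp add: has_integral_Icc_iff_Ioo)
  also have "?this \<longleftrightarrow> ((\<lambda>t. t powr (a - 1) * (1 - t) ^ n) has_integral Beta a (real n + 1)) {0<..<1}"
    by (intro has_integral_cong) (simp add: powr_realpow)
  finally show ?thesis
    using assms by (simp add: has_integral_Icc_iff_Ioo Beta_real_Suc)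
qed

lemma
  fixes a x :: real
  assumes a: "a > 0" and x: "x \<ge> 0"
  shows integrable_powr_exp: "(\<lambda>u. u powr (a - 1) * exp (x * (1 - u))) integrable_on {0..1}"
    and sums_integral_powr_exp:
      "(\<lambda>m. x ^ m / pochhammer a (Suc m))
         sums integral {0..1} (\<lambda>u. u powr (a - 1) * exp (x * (1 - u)))"
proof -
  define g where "g u = u powr (a - 1) * exp (x * (1 - u))" for u
  define f where "f k u = (\<Sum>m<k. u powr (a - 1) * (1 - u) ^ m * (x ^ m / fact m))" for k u
  have f_eq: "f k u = u powr (a - 1) * (\<Sum>m<k. (x * (1 - u)) ^ m / fact m)" for k u
    by (simp add: f_def sum_distrib_left power_mult_distrib mult_ac)
  have f: "(f k has_integral (\<Sum>m<k. x ^ m / pochhammer a (Suc m))) {0..1}" for k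
    unfolding f_def
  proof (rule has_integral_sum)
    fix m
    show "((\<lambda>u. u powr (a - 1) * (1 - u) ^ m * (x ^ m / fact m)) has_integral
            x ^ m / pochhammer a (Suc m)) {0..1}"
      using has_integral_mult_left[OF has_integral_powr_times_power[OF a, of m],
          of "x ^ m / fact m"]
      by simp
  qed simp
  have partial_sum_le_exp: "(\<Sum>m<k. y ^ m / fact m) \<le> exp y" if "y \<ge> 0" for k and y :: real
    using sum_le_suminf[OF summable_exp[of y], of "{..<k}"] that
    by (simp add: exp_def divide_inverse_commute)
  have "(\<lambda>u. u powr (a - 1) * exp x) integrable_on {0..1}"
    using has_integral_mult_left[OF has_integral_powr_times_power[OF a, of 0], of "exp x"] by auto
  have "g integrable_on {0..1} \<and> (\<lambda>k. integral {0..1} (f k)) \<longlonglongrightarrow> integral {0..1} g"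
  proof (rule monotone_convergence_increasing)
    show "f k integrable_on {0..1}" for k using f by blast
    show "f k u \<le> f (Suc k) u" if "u \<in> {0..1}" for k u
      using that x by (simp add: f_def)
    show "(\<lambda>k. f k u) \<longlonglongrightarrow> g u" for u
      unfolding f_eq g_def using exp_converges[of "x * (1 - u)"]
      by (intro tendsto_intros) (simp add: sums_def field_simps)
    have "integral {0..1} (f k) \<le> integral {0..1} (\<lambda>u. u powr (a - 1) * exp x)" for k
    proof (rule integral_le)
      show "f k u \<le> u powr (a - 1) * exp x" if "u \<in> {0..1}" for u
        unfolding f_eq using that x partial_sum_le_exp[of "x * (1 - u)" k]
        by (intro mult_left_mono order.trans[OF _ exp_mono[of "x * (1 - u)" x]])
           (auto simp: mult_left_le)
    qed (use f \<open>(\<lambda>u. u powr (a - 1) * exp x) integrable_on {0..1}\<close> in blast)+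
    moreover have "integral {0..1} (f k) \<ge> 0" for k
      using a x f[of k]
      by (auto simp: integral_unique intro!: sum_nonneg divide_nonneg_pos pochhammer_pos)
    ultimately show "bounded (range (\<lambda>k. integral {0..1} (f k)))"
      by (intro boundedI[of _ "integral {0..1} (\<lambda>u. u powr (a - 1) * exp x)"]) auto
  qed
  then show "g integrable_on {0..1}" "(\<lambda>m. x ^ m / pochhammer a (Suc m)) sums integral {0..1} g"
    using f[THEN integral_unique] by (auto simp: sums_def)
qed

lemma prod_p_s:
  fixes \<theta> s :: real
  assumes "\<theta> > 0" "s > 0"
  shows "(\<Prod>k\<le>n. p_s \<theta> s k) = (s / \<theta>) ^ Suc n / pochhammer (s / \<theta> + 1) (Suc n)"
proof (induction n)
  case 0
  show ?case using assms by (simp add: p_s_def field_simps)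
next
  case (Suc n)
  have "p_s \<theta> s (Suc n) = (s / \<theta>) / (s / \<theta> + 1 + real (Suc n))"
    using assms by (simp add: p_s_def field_simps)
  moreover have "pochhammer (s / \<theta> + 1) (Suc n) > 0"
    using assms by (intro pochhammer_pos add_pos_pos divide_pos_pos) auto
  ultimately show ?case
    using Suc.IH by (simp add: pochhammer_Suc field_simps del: of_nat_Suc)
qed

lemma F_s_eq_integral:
  fixes \<theta> s \<rho> :: real
  assumes "\<theta> > 0" "s > 0" "\<rho> \<ge> 0"
  defines "a \<equiv> s / \<theta>"
  shows "F_s \<theta> s \<rho> = a * integral {0..1} (\<lambda>u. u powr (a - 1) * exp (a * \<rho> * (1 - u))) - 1"
proof -
  have a: "a > 0" using assms by (simp add: a_def)
  define I where "I = integral {0..1} (\<lambda>u. u powr (a - 1) * exp (a * \<rho> * (1 - u)))"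
  have "(\<lambda>m. (a * \<rho>) ^ m / pochhammer a (Suc m)) sums I"
    unfolding I_def using a assms(3) by (intro sums_integral_powr_exp) auto
  then have shifted: "(\<lambda>n. (a * \<rho>) ^ Suc n / pochhammer a (Suc (Suc n))) sums (I - 1 / a)"
    by (subst sums_Suc_iff) simp
  have "(\<lambda>n. a * ((a * \<rho>) ^ Suc n / pochhammer a (Suc (Suc n)))) sums (a * I - 1)"
    using sums_mult[OF shifted, of a] a by (simp add: right_diff_distrib)
  moreover have "(\<Prod>k\<le>n. p_s \<theta> s k) * \<rho> ^ (n + 1)
                   = a * ((a * \<rho>) ^ Suc n / pochhammer a (Suc (Suc n)))" for n
    using prod_p_s[OF assms(1,2), of n] a
    by (simp add: a_def pochhammer_rec[of _ "Suc n"] power_mult_distrib field_simps)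
  ultimately show ?thesis
    unfolding F_s_def I_def by (simp add: sums_unique[symmetric])
qed

section \<open>The rescaled kernel\<close>

definition scaled_kernel :: "real \<Rightarrow> real \<Rightarrow> real \<Rightarrow> real" where
  "scaled_kernel h c y = (1 - h * y) powr (1 / h\<^sup>2 - 1) * exp ((1 - c * h) * y / h)"

definition log_scaled_kernel :: "real \<Rightarrow> real \<Rightarrow> real \<Rightarrow> real" where
  "log_scaled_kernel h c y = (1 / h\<^sup>2 - 1) * ln (1 - h * y) + (1 - c * h) * y / h"

lemma has_integral_scaled_kernel:
  fixes h c :: real
  assumes h: "h > 0" and ch: "c * h \<le> 1"
  shows "(scaled_kernel h c has_integral
           integral {0..1} (\<lambda>u. u powr (1 / h\<^sup>2 - 1) * exp (1 / h\<^sup>2 * (1 - c * h) * (1 - u))) / h)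
         {0..1 / h}"
proof -
  let ?f = "\<lambda>u. u powr (1 / h\<^sup>2 - 1) * exp (1 / h\<^sup>2 * (1 - c * h) * (1 - u))"
  have "(?f has_integral integral {0..1} ?f) (cbox 0 1)"
    using integrable_powr_exp[of "1 / h\<^sup>2" "1 / h\<^sup>2 * (1 - c * h)"] h ch
    by (auto intro!: integrable_integral)
  from has_integral_affinity[OF this, of "- h" 1] h
  have "((\<lambda>y. ?f (1 - h * y)) has_integral integral {0..1} ?f / h) ((\<lambda>x. (1 - x) / h) ` {0..1})"
    by (simp add: diff_divide_distrib)
  moreover have "(\<lambda>x. (1 - x) / h) ` {0..1} = {0..1 / h}"
  proof -
    have affine: "(\<lambda>x. (1 - x) / h) = (\<lambda>x. (- 1 / h) * x + 1 / h)"
      by (rule ext) (simp add: diff_divide_distrib)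
    show ?thesis
      using h unfolding affine image_affinity_atLeastAtMost by simp
  qed
  moreover have "?f (1 - h * y) = scaled_kernel h c y" for y
    using h by (simp add: scaled_kernel_def field_simps power2_eq_square)
  ultimately show ?thesis by simp
qed

lemma scaled_kernel_nonneg: "scaled_kernel h c y \<ge> 0"
  by (simp add: scaled_kernel_def)

lemma scaled_kernel_eq_exp_log_scaled_kernel:
  "h > 0 \<Longrightarrow> h * y < 1 \<Longrightarrow> scaled_kernel h c y = exp (log_scaled_kernel h c y)"
  by (simp add: scaled_kernel_def log_scaled_kernel_def powr_def exp_add)

definition gauss_weight :: "real \<Rightarrow> real \<Rightarrow> real" where
  "gauss_weight c y = exp (- (y\<^sup>2 / 2 + c * y))"

definition gauss_tail :: "real \<Rightarrow> real" where
  "gauss_tail c = integral {0..} (gauss_weight c)"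

lemma gauss_weight_absolutely_integrable: "gauss_weight c absolutely_integrable_on {a..}"
  unfolding gauss_weight_def
  by (rule absolutely_integrable_on_Ici_exp_decay) (fastforce intro!: continuous_intros, real_asymp)

lemma gauss_tail_eq_mills_ratio: "gauss_tail c = sqrt 2 * mills_ratio (c / sqrt 2)"
proof -
  define d where "d = c / sqrt 2"
  define g where "g w = exp (- w\<^sup>2)" for w :: real
  have g: "g absolutely_integrable_on {d..}"
    unfolding g_def
    by (rule absolutely_integrable_on_Ici_exp_decay) (fastforce intro!: continuous_intros, real_asymp)
  have finite:
    "integral {0..T} (gauss_weight c) = exp (c\<^sup>2 / 2) * sqrt 2 * integral {d..(T + c) / sqrt 2} g"
    if "T \<ge> 0" for T
  proof -
    have "(g has_integral integral {d..(T + c) / sqrt 2} g) (cbox d ((T + c) / sqrt 2))"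
      unfolding g_def
      by (auto intro!: integrable_integral integrable_continuous_interval continuous_intros)
    from has_integral_affinity[OF this, of "1 / sqrt 2" d]
    have "((\<lambda>x. g (x / sqrt 2 + d)) has_integral sqrt 2 * integral {d..(T + c) / sqrt 2} g)
            ((\<lambda>x. sqrt 2 * x - sqrt 2 * d) ` {d..(T + c) / sqrt 2})"
      by (simp add: field_simps)
    moreover have "(\<lambda>x. sqrt 2 * x - sqrt 2 * d) ` {d..(T + c) / sqrt 2} = {0..T}"
      using that by (simp add: image_affinity_atLeastAtMost_diff d_def divide_right_mono)
    ultimately have
      "((\<lambda>x. g (x / sqrt 2 + d)) has_integral sqrt 2 * integral {d..(T + c) / sqrt 2} g) {0..T}"
      by simp
    moreover have "gauss_weight c = (\<lambda>x. exp (c\<^sup>2 / 2) * g (x / sqrt 2 + d))"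
      by (rule ext)
         (simp add: gauss_weight_def g_def d_def exp_add[symmetric] power2_eq_square field_simps)
    ultimately show ?thesis
      using has_integral_mult_right integral_unique by (metis mult.assoc)
  qed
  have "filterlim (\<lambda>T. (T + c) / sqrt 2) at_top at_top" by real_asymp
  then have "((\<lambda>T. exp (c\<^sup>2 / 2) * sqrt 2 * integral {d..(T + c) / sqrt 2} g)
               \<longlongrightarrow> exp (c\<^sup>2 / 2) * sqrt 2 * integral {d..} g) at_top"
    by (intro tendsto_intros filterlim_compose[OF tendsto_integral_Icc_Ici[OF g]])
  moreover have "eventually (\<lambda>T. exp (c\<^sup>2 / 2) * sqrt 2 * integral {d..(T + c) / sqrt 2} g
                   = integral {0..T} (gauss_weight c)) at_top"
    using eventually_ge_at_top[of 0] by eventually_elim (simp add: finite)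
  ultimately have "((\<lambda>T. integral {0..T} (gauss_weight c))
                      \<longlongrightarrow> exp (c\<^sup>2 / 2) * sqrt 2 * integral {d..} g) at_top"
    by (rule Lim_transform_eventually)
  then have "gauss_tail c = exp (c\<^sup>2 / 2) * sqrt 2 * integral {d..} g"
    using tendsto_unique[OF trivial_limit_at_top_linorder
        tendsto_integral_Icc_Ici[OF gauss_weight_absolutely_integrable]]
    unfolding gauss_tail_def by blast
  moreover have "d\<^sup>2 = c\<^sup>2 / 2" by (simp add: d_def power_divide)
  ultimately show ?thesis
    by (simp add: mills_ratio_def g_def[abs_def] d_def[symmetric])
qed

lemma has_integral_gauss_moment:
  "((\<lambda>y. gauss_weight c y * (y - y ^ 3 / 3))
      has_integral (1 - c\<^sup>2) / 3 + c ^ 3 / 3 * gauss_tail c) {0..}"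
proof -
  define F where "F y = (y\<^sup>2 - c * y + c\<^sup>2 - 1) / 3 * gauss_weight c y" for y
  have main: "((\<lambda>y. gauss_weight c y * (y - y ^ 3 / 3 - c ^ 3 / 3)) has_integral (0 - F 0)) {0..}"
  proof (rule has_integral_Ici_fundamental)
    show "(\<lambda>y. gauss_weight c y * (y - y ^ 3 / 3 - c ^ 3 / 3)) absolutely_integrable_on {0..}"
      unfolding gauss_weight_def
      by (rule absolutely_integrable_on_Ici_exp_decay)
         (fastforce intro!: continuous_intros, real_asymp)
    show "(F has_real_derivative gauss_weight c y * (y - y ^ 3 / 3 - c ^ 3 / 3)) (at y)" for y
      unfolding F_def gauss_weight_def
      by (auto intro!: derivative_eq_intros simp: field_simps power2_eq_square power3_eq_cube)
    show "(F \<longlongrightarrow> 0) at_top"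
      unfolding F_def gauss_weight_def by real_asymp
  qed
  have tail: "((\<lambda>y. c ^ 3 / 3 * gauss_weight c y) has_integral c ^ 3 / 3 * gauss_tail c) {0..}"
    using gauss_weight_absolutely_integrable unfolding gauss_tail_def
    by (intro has_integral_mult_right integrable_integral) (simp add: absolutely_integrable_on_def)
  have "0 - F 0 = (1 - c\<^sup>2) / 3"
    by (simp add: F_def gauss_weight_def field_simps)
  with has_integral_add[OF main tail] show ?thesis
    by (simp add: gauss_weight_def algebra_simps)
qed

section \<open>Expansion of the rescaled kernel\<close>

definition envelope :: "real \<Rightarrow> real \<Rightarrow> real" where
  "envelope c y = exp (- 3 * y\<^sup>2 / 8 + (1 / 2 + \<bar>c\<bar>) * y)"

lemma gauss_weight_le_envelope:
  assumes "y \<ge> 0"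
  shows "gauss_weight c y \<le> envelope c y"
proof -
  have "- c * y \<le> \<bar>c\<bar> * y" using assms by (intro mult_right_mono) auto
  moreover have "(1 / 2 + \<bar>c\<bar>) * y = y / 2 + \<bar>c\<bar> * y" by (simp add: algebra_simps)
  ultimately have "- (y\<^sup>2 / 2 + c * y) \<le> - 3 * y\<^sup>2 / 8 + (1 / 2 + \<bar>c\<bar>) * y"
    using assms zero_le_power2[of y] by linarith
  then show ?thesis by (simp add: gauss_weight_def envelope_def)
qed

lemma log_scaled_kernel_le:
  assumes h: "0 < h" "h \<le> 1 / 2" and y: "0 \<le> y" "h * y < 1"
  shows "log_scaled_kernel h c y \<le> - 3 * y\<^sup>2 / 8 + (1 / 2 + \<bar>c\<bar>) * y"
proof -
  have "1 / h\<^sup>2 - 1 \<ge> 0"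
    using h power_le_one[of h 2] by (simp add: field_simps)
  then have "(1 / h\<^sup>2 - 1) * ln (1 - h * y) \<le> (1 / h\<^sup>2 - 1) * (- (h * y) - (h * y)\<^sup>2 / 2)"
    using h y by (intro mult_left_mono ln_one_minus_le) auto
  also have "\<dots> = - y / h - y\<^sup>2 / 2 + h * y + h\<^sup>2 * y\<^sup>2 / 2"
    using h by (simp add: field_simps power2_eq_square)
  finally have "log_scaled_kernel h c y \<le> - y\<^sup>2 / 2 + h * y + h\<^sup>2 * y\<^sup>2 / 2 - c * y"
    using h by (simp add: log_scaled_kernel_def field_simps)
  moreover have "h\<^sup>2 * y\<^sup>2 \<le> y\<^sup>2 / 4"
  proof -
    have "h\<^sup>2 \<le> 1 / 4" using power_mono[of h "1 / 2" 2] h by (simp add: power_divide)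
    from mult_right_mono[OF this zero_le_power2[of y]] show ?thesis by simp
  qed
  moreover have "h * y \<le> y / 2"
    using h y mult_right_mono[of h "1 / 2" y] by simp
  moreover have "- c * y \<le> \<bar>c\<bar> * y"
    using y by (intro mult_right_mono) auto
  ultimately show ?thesis by (simp add: algebra_simps)
qed

lemma scaled_kernel_le_envelope:
  assumes h: "0 < h" "h \<le> 1 / 2" and y: "0 \<le> y" "y \<le> 1 / h"
  shows "scaled_kernel h c y \<le> envelope c y"
proof (cases "h * y < 1")
  case True
  then show ?thesis
    using log_scaled_kernel_le[OF h y(1) True, of c]
    by (simp add: scaled_kernel_eq_exp_log_scaled_kernel[OF h(1) True] envelope_def)
next
  case False
  with h y have "1 - h * y = 0" by (simp add: field_simps)
  then show ?thesis by (simp add: scaled_kernel_def envelope_def)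
qed

lemma log_scaled_kernel_add_eq:
  assumes "h > 0"
  shows "log_scaled_kernel h c y + (y\<^sup>2 / 2 + c * y)
           = (ln (1 - h * y) + h * y + (h * y)\<^sup>2 / 2) / h\<^sup>2 - ln (1 - h * y)"
  using assms by (simp add: log_scaled_kernel_def field_simps power2_eq_square)

lemma abs_log_scaled_kernel_add_le:
  assumes h: "0 < h" and y: "0 \<le> y" "h * y \<le> 1 / 2"
  shows "\<bar>log_scaled_kernel h c y + (y\<^sup>2 / 2 + c * y)\<bar> \<le> h * (y ^ 3 + 2 * y)"
proof -
  have z: "0 \<le> h * y" "h * y \<le> 1 / 2" using h y by auto
  let ?A = "(ln (1 - h * y) + h * y + (h * y)\<^sup>2 / 2) / h\<^sup>2"
  have "\<bar>?A\<bar> \<le> (h * y) ^ 3 / h\<^sup>2"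
    using abs_ln_one_minus_taylor2_le[OF z] h by (simp add: abs_divide divide_right_mono)
  also have "\<dots> = h * y ^ 3"
    using h by (simp add: power_mult_distrib field_simps eval_nat_numeral)
  finally have "\<bar>?A\<bar> \<le> h * y ^ 3" .
  moreover have "\<bar>ln (1 - h * y)\<bar> \<le> 2 * (h * y)"
    using abs_ln_one_plus_x_minus_x_bound[of "- (h * y)"] z
      mult_right_mono[of "h * y" "1 / 2" "h * y"]
    by (simp add: power2_eq_square)
  ultimately show ?thesis
    unfolding log_scaled_kernel_add_eq[OF h] using abs_triangle_ineq4[of ?A "ln (1 - h * y)"]
    by (simp add: algebra_simps)
qed

lemma abs_log_scaled_kernel_expansion_le:
  assumes h: "0 < h" and y: "0 \<le> y" "h * y \<le> 1 / 2"
  shows "\<bar>log_scaled_kernel h c y + (y\<^sup>2 / 2 + c * y) - h * (y - y ^ 3 / 3)\<bar>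
           \<le> h\<^sup>2 * (y ^ 4 + 2 * y\<^sup>2)"
proof -
  have z: "0 \<le> h * y" "h * y \<le> 1 / 2" using h y by auto
  let ?A = "(ln (1 - h * y) + h * y + (h * y)\<^sup>2 / 2 + (h * y) ^ 3 / 3) / h\<^sup>2"
  have eq: "log_scaled_kernel h c y + (y\<^sup>2 / 2 + c * y) - h * (y - y ^ 3 / 3)
              = ?A - (ln (1 - h * y) + h * y)"
    unfolding log_scaled_kernel_add_eq[OF h] using h
    by (simp add: field_simps power2_eq_square power3_eq_cube)
  have "\<bar>?A\<bar> \<le> h\<^sup>2 * y ^ 4"
    using abs_ln_one_minus_taylor3_le[OF z] h
    by (simp add: abs_divide divide_le_eq power_mult_distrib field_simps eval_nat_numeral)
  moreover have "\<bar>ln (1 - h * y) + h * y\<bar> \<le> 2 * h\<^sup>2 * y\<^sup>2"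
    using abs_ln_one_plus_x_minus_x_bound[of "- (h * y)"] z by (simp add: power_mult_distrib)
  ultimately show ?thesis
    unfolding eq using abs_triangle_ineq4[of ?A "ln (1 - h * y) + h * y"]
    by (simp add: algebra_simps)
qed

section \<open>Dominated convergence\<close>

text \<open>Beyond \<open>y = 1/h\<close> the base of the power in \<open>scaled_kernel\<close> is negative and \<open>powr\<close>
  returns junk, hence the cut-off.\<close>

definition defect :: "real \<Rightarrow> real \<Rightarrow> real \<Rightarrow> real" where
  "defect h c y = ((if y \<le> 1 / h then scaled_kernel h c y else 0) - gauss_weight c y) / h"

lemma abs_defect_le:
  assumes h: "0 < h" "h \<le> 1 / 2" and y: "0 \<le> y"
  shows "\<bar>defect h c y\<bar> \<le> (y ^ 3 + 4 * y) * envelope c y"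
proof -
  have env: "envelope c y > 0" by (simp add: envelope_def)
  have gauss: "0 < gauss_weight c y" "gauss_weight c y \<le> envelope c y"
    using gauss_weight_le_envelope[OF y] by (auto simp: gauss_weight_def)
  have "y ^ 3 \<ge> 0" using y by simp
  consider "h * y \<le> 1 / 2" | "1 / 2 < h * y" "y \<le> 1 / h" | "1 / h < y" by linarith
  then show ?thesis
  proof cases
    case 1
    then have hy: "h * y < 1" "y \<le> 1 / h" using h by (auto simp: field_simps)
    have "\<bar>exp (log_scaled_kernel h c y) - exp (- (y\<^sup>2 / 2 + c * y))\<bar>
            \<le> \<bar>log_scaled_kernel h c y + (y\<^sup>2 / 2 + c * y)\<bar>
              * exp (max (log_scaled_kernel h c y) (- (y\<^sup>2 / 2 + c * y)))"
      using abs_exp_diff_le[of "log_scaled_kernel h c y" "- (y\<^sup>2 / 2 + c * y)"]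
      by (simp only: diff_minus_eq_add)
    also have "\<dots> \<le> h * (y ^ 3 + 2 * y) * envelope c y"
      using abs_log_scaled_kernel_add_le[OF h(1) y 1] log_scaled_kernel_le[OF h y hy(1)] gauss
        h y \<open>y ^ 3 \<ge> 0\<close>
      by (intro mult_mono) (auto simp: envelope_def gauss_weight_def)
    finally have "\<bar>defect h c y\<bar> \<le> (y ^ 3 + 2 * y) * envelope c y"
      using h hy by (simp add: defect_def scaled_kernel_eq_exp_log_scaled_kernel gauss_weight_def
          abs_divide divide_le_eq mult_ac)
    also have "\<dots> \<le> (y ^ 3 + 4 * y) * envelope c y"
      using env y by (intro mult_right_mono) auto
    finally show ?thesis .
  next
    case 2
    have "\<bar>scaled_kernel h c y - gauss_weight c y\<bar> \<le> 2 * envelope c y"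
      using gauss scaled_kernel_le_envelope[OF h y 2(2), of c] scaled_kernel_nonneg[of h c y]
      unfolding abs_le_iff by auto
    then have "\<bar>defect h c y\<bar> \<le> 2 * envelope c y / h"
      using 2 h by (simp add: defect_def abs_divide divide_right_mono)
    also have "\<dots> \<le> 2 * envelope c y * (2 * y)"
      using 2 h env by (simp add: field_simps)
    also have "\<dots> \<le> (y ^ 3 + 4 * y) * envelope c y"
      using env \<open>y ^ 3 \<ge> 0\<close> by (simp add: algebra_simps)
    finally show ?thesis .
  next
    case 3
    then have "\<bar>defect h c y\<bar> = gauss_weight c y / h"
      using gauss h by (simp add: defect_def)
    also have "\<dots> \<le> envelope c y * (1 / h)"
      using gauss h by (simp add: divide_right_mono)
    also have "\<dots> \<le> envelope c y * y"
      using 3 env by (intro mult_left_mono) auto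
    also have "\<dots> \<le> (y ^ 3 + 4 * y) * envelope c y"
      using env y \<open>y ^ 3 \<ge> 0\<close> by (simp add: algebra_simps)
    finally show ?thesis .
  qed
qed

lemma tendsto_exp_minus_one_divide:
  fixes w g :: "'a \<Rightarrow> real"
  assumes w: "(w \<longlongrightarrow> 0) F" and wg: "((\<lambda>x. w x / g x) \<longlongrightarrow> L) F"
  shows "((\<lambda>x. (exp (w x) - 1) / g x) \<longlongrightarrow> L) F"
proof -
  have "eventually (\<lambda>x. norm ((exp (w x) - 1 - w x) / g x) \<le> \<bar>w x\<bar> * \<bar>w x / g x\<bar>) F"
    using order_tendstoD(2)[OF tendsto_rabs_zero[OF w] zero_less_one]
  proof eventually_elim
    case (elim x)
    then have "\<bar>exp (w x) - 1 - w x\<bar> \<le> (w x)\<^sup>2" by (intro abs_exp_minus_one_minus_le) simp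
    then show ?case
      by (simp add: abs_divide power2_eq_square divide_right_mono)
  qed
  moreover have "((\<lambda>x. \<bar>w x\<bar> * \<bar>w x / g x\<bar>) \<longlongrightarrow> 0) F"
    using tendsto_mult[OF tendsto_rabs[OF w] tendsto_rabs[OF wg]] by simp
  ultimately have "((\<lambda>x. (exp (w x) - 1 - w x) / g x) \<longlongrightarrow> 0) F"
    by (rule Lim_null_comparison)
  from tendsto_add[OF this wg] show ?thesis
    by (simp add: diff_divide_distrib)
qed

lemma tendsto_defect:
  assumes y: "y \<ge> 0"
  shows "((\<lambda>h. defect h c y) \<longlongrightarrow> gauss_weight c y * (y - y ^ 3 / 3)) (at_right 0)"
proof -
  define w where "w h = log_scaled_kernel h c y + (y\<^sup>2 / 2 + c * y)" for h
  have small: "eventually (\<lambda>h. 0 < h \<and> h * y \<le> 1 / 2 \<and> h \<le> 1 / 2) (at_right 0)"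
  proof -
    have "0 < 1 / (2 * y + 2)" using y by simp
    from eventually_at_right_real[OF this] show ?thesis
    proof eventually_elim
      case (elim h)
      then have "h * (2 * y + 2) < 1" using y by (simp add: field_simps)
      moreover have "h * y \<ge> 0" using elim y by simp
      ultimately show ?case using elim by (simp add: algebra_simps)
    qed
  qed
  have lin: "((\<lambda>h::real. h) \<longlongrightarrow> 0) (at_right 0)" by (rule tendsto_ident_at)
  have "((\<lambda>h. w h) \<longlongrightarrow> 0) (at_right 0)"
  proof (rule Lim_null_comparison[OF _ tendsto_mult_left_zero[OF lin]])
    show "eventually (\<lambda>h. norm (w h) \<le> h * (y ^ 3 + 2 * y)) (at_right 0)"
      using small by eventually_elim (simp add: w_def abs_log_scaled_kernel_add_le y)
  qed
  moreover have "((\<lambda>h. w h / h - (y - y ^ 3 / 3)) \<longlongrightarrow> 0) (at_right 0)"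
  proof (rule Lim_null_comparison[OF _ tendsto_mult_left_zero[OF lin]])
    show "eventually (\<lambda>h. norm (w h / h - (y - y ^ 3 / 3)) \<le> h * (y ^ 4 + 2 * y\<^sup>2)) (at_right 0)"
      using small
    proof eventually_elim
      case (elim h)
      then have "w h / h - (y - y ^ 3 / 3) = (w h - h * (y - y ^ 3 / 3)) / h"
        by (simp add: diff_divide_distrib)
      then have "norm (w h / h - (y - y ^ 3 / 3)) = \<bar>w h - h * (y - y ^ 3 / 3)\<bar> / h"
        using elim by (simp add: abs_divide)
      also have "\<dots> \<le> h\<^sup>2 * (y ^ 4 + 2 * y\<^sup>2) / h"
        using elim abs_log_scaled_kernel_expansion_le[of h y c] y
        by (intro divide_right_mono) (simp_all add: w_def)
      also have "\<dots> = h * (y ^ 4 + 2 * y\<^sup>2)"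
        by (simp add: power2_eq_square)
      finally show ?case .
    qed
  qed
  then have "((\<lambda>h. w h / h) \<longlongrightarrow> y - y ^ 3 / 3) (at_right 0)"
    by (simp add: LIM_zero_iff)
  ultimately have "((\<lambda>h. gauss_weight c y * ((exp (w h) - 1) / h))
                      \<longlongrightarrow> gauss_weight c y * (y - y ^ 3 / 3)) (at_right 0)"
    by (intro tendsto_mult_left tendsto_exp_minus_one_divide)
  moreover have
    "eventually (\<lambda>h. gauss_weight c y * ((exp (w h) - 1) / h) = defect h c y) (at_right 0)"
    using small
  proof eventually_elim
    case (elim h)
    then have "h * y < 1" "y \<le> 1 / h" by (auto simp: field_simps)
    moreover have "log_scaled_kernel h c y = w h + - (y\<^sup>2 / 2 + c * y)"
      by (simp add: w_def)
    ultimately have "scaled_kernel h c y = exp (w h) * gauss_weight c y"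
      using elim by (simp only: scaled_kernel_eq_exp_log_scaled_kernel exp_add gauss_weight_def)
    with \<open>y \<le> 1 / h\<close> show ?case
      by (simp add: defect_def right_diff_distrib diff_divide_distrib)
  qed
  ultimately show ?thesis
    by (rule Lim_transform_eventually)
qed
lemma has_integral_defect:
  assumes h: "0 < h" and ch: "c * h \<le> 1"
  shows "(defect h c has_integral
           (integral {0..1 / h} (scaled_kernel h c) - gauss_tail c) / h) {0..}"
proof -
  have "(scaled_kernel h c has_integral integral {0..1 / h} (scaled_kernel h c))
          ({..1 / h} \<inter> {0..})"
    using has_integral_scaled_kernel[OF h ch] by (auto simp: Int_commute atLeastAtMost_def)
  then have "((\<lambda>y. if y \<in> {..1 / h} then scaled_kernel h c y else 0)
                has_integral integral {0..1 / h} (scaled_kernel h c)) {0..}"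
    by (simp only: has_integral_restrict_Int)
  moreover have "(gauss_weight c has_integral gauss_tail c) {0..}"
    using gauss_weight_absolutely_integrable unfolding gauss_tail_def
    by (auto simp: absolutely_integrable_on_def)
  ultimately show ?thesis
    unfolding defect_def by (auto dest: has_integral_divide has_integral_diff)
qed

lemma tendsto_integral_defect:
  "((\<lambda>h. integral {0..} (defect h c)) \<longlongrightarrow> (1 - c\<^sup>2) / 3 + c ^ 3 / 3 * gauss_tail c) (at_right 0)"
proof (rule tendsto_at_right_sequentially[of 0 "1 / (2 + \<bar>c\<bar>)"])
  fix H :: "nat \<Rightarrow> real"
  assume pos: "\<And>n. 0 < H n" and small: "\<And>n. H n < 1 / (2 + \<bar>c\<bar>)" and lim: "H \<longlonglongrightarrow> 0"
  have H: "H n \<le> 1 / 2" "c * H n \<le> 1" for n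
  proof -
    have "2 * H n + \<bar>c\<bar> * H n < 1" using pos[of n] small[of n] by (simp add: field_simps)
    moreover have "0 \<le> \<bar>c\<bar> * H n" "c * H n \<le> \<bar>c\<bar> * H n"
      using pos[of n] by (auto intro: mult_right_mono)
    ultimately show "H n \<le> 1 / 2" "c * H n \<le> 1" using pos[of n] by linarith+
  qed
  have "filterlim H (at_right 0) sequentially"
    using pos lim by (intro tendsto_imp_filterlim_at_right) auto
  have "(\<lambda>n. integral {0..} (defect (H n) c))
          \<longlonglongrightarrow> integral {0..} (\<lambda>y. gauss_weight c y * (y - y ^ 3 / 3))"
  proof (rule dominated_convergence(2))
    show "defect (H n) c integrable_on {0..}" for n
      using has_integral_defect pos H by blast
    show "(\<lambda>y. (y ^ 3 + 4 * y) * envelope c y) integrable_on {0..}"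
      unfolding envelope_def
      by (rule absolutely_integrable_on_Ici_exp_decay[THEN set_lebesgue_integral_eq_integral(1)])
         (fastforce intro!: continuous_intros, real_asymp)
    show "norm (defect (H n) c y) \<le> (y ^ 3 + 4 * y) * envelope c y" if "y \<in> {0..}" for n y
      using abs_defect_le pos H that by auto
    show "(\<lambda>n. defect (H n) c y) \<longlonglongrightarrow> gauss_weight c y * (y - y ^ 3 / 3)" if "y \<in> {0..}" for y
      using filterlim_compose[OF tendsto_defect \<open>filterlim H (at_right 0) sequentially\<close>] that
      by auto
  qed
  then show "(\<lambda>n. integral {0..} (defect (H n) c)) \<longlonglongrightarrow> (1 - c\<^sup>2) / 3 + c ^ 3 / 3 * gauss_tail c"
    using has_integral_gauss_moment[THEN integral_unique] by simp
qed simp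

lemma F_s_eq_integral_defect:
  fixes \<theta> s c :: real
  assumes \<theta>: "\<theta> > 0" and s: "s > 0" and ch: "c * sqrt (\<theta> / s) \<le> 1"
  shows "F_s \<theta> s (1 - c * sqrt (\<theta> / s))
           = integral {0..} (defect (sqrt (\<theta> / s)) c) + gauss_tail c / sqrt (\<theta> / s) - 1"
proof -
  define h where "h = sqrt (\<theta> / s)"
  have h: "h > 0" and a: "s / \<theta> = 1 / h\<^sup>2" and ch: "c * h \<le> 1"
    using \<theta> s ch by (auto simp: h_def)
  let ?I = "integral {0..1} (\<lambda>u. u powr (1 / h\<^sup>2 - 1) * exp (1 / h\<^sup>2 * (1 - c * h) * (1 - u)))"
  have "F_s \<theta> s (1 - c * h) = 1 / h\<^sup>2 * ?I - 1"
    using F_s_eq_integral[OF \<theta> s, of "1 - c * h"] ch by (simp add: a)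
  also have "?I = h * integral {0..1 / h} (scaled_kernel h c)"
    using integral_unique[OF has_integral_scaled_kernel[OF h ch]] h by simp
  also have "integral {0..1 / h} (scaled_kernel h c)
               = h * integral {0..} (defect h c) + gauss_tail c"
    using integral_unique[OF has_integral_defect[OF h ch]] h by (simp add: field_simps)
  also have "1 / h\<^sup>2 * (h * (h * integral {0..} (defect h c) + gauss_tail c)) - 1
               = integral {0..} (defect h c) + gauss_tail c / h - 1"
    using h by (simp add: field_simps power2_eq_square)
  finally show ?thesis by (simp add: h_def)
qed

lemma F_s_remainder_eq_integral_defect:
  fixes \<theta> \<gamma> s :: real
  assumes \<theta>: "\<theta> > 0" and s: "s > 0" "\<gamma>\<^sup>2 \<le> s"
  defines "c \<equiv> \<gamma> / sqrt \<theta>"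
  shows "F_s \<theta> s (1 - \<gamma> / sqrt s)
            - (sqrt (2 / \<theta>) * mills_ratio (\<gamma> / sqrt (2 * \<theta>)) * sqrt s
               + \<gamma> ^ 3 * sqrt 2 / (3 * \<theta> powr (3/2)) * mills_ratio (\<gamma> / sqrt (2 * \<theta>))
               - \<gamma>\<^sup>2 / (3 * \<theta>) - 2 / 3)
         = integral {0..} (defect (sqrt (\<theta> / s)) c) - ((1 - c\<^sup>2) / 3 + c ^ 3 / 3 * gauss_tail c)"
proof -
  define M where "M = mills_ratio (\<gamma> / sqrt (2 * \<theta>))"
  have ch: "c * sqrt (\<theta> / s) = \<gamma> / sqrt s"
    using \<theta> s by (simp add: c_def real_sqrt_divide)
  have "\<gamma> \<le> sqrt s"
    using real_sqrt_le_mono[OF s(2)] by simp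
  then have "c * sqrt (\<theta> / s) \<le> 1"
    unfolding ch using s by simp
  note F = F_s_eq_integral_defect[OF \<theta> s(1) this, unfolded ch]
  have tail: "gauss_tail c = sqrt 2 * M"
    unfolding c_def M_def gauss_tail_eq_mills_ratio by (simp add: real_sqrt_mult mult_ac)
  have main: "gauss_tail c / sqrt (\<theta> / s) = sqrt (2 / \<theta>) * M * sqrt s"
    using \<theta> s by (simp add: tail real_sqrt_divide)
  have "\<theta> powr (3 / 2) = sqrt \<theta> ^ 3"
    using \<theta> by (simp add: powr_half_sqrt[symmetric] powr_realpow[symmetric] powr_powr)
  then have cubic: "c ^ 3 / 3 * gauss_tail c = \<gamma> ^ 3 * sqrt 2 / (3 * \<theta> powr (3 / 2)) * M"
    unfolding tail by (simp add: c_def power_divide)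
  have quadratic: "(1 - c\<^sup>2) / 3 = 1 / 3 - \<gamma>\<^sup>2 / (3 * \<theta>)"
    using \<theta> by (simp add: c_def power_divide field_simps)
  show ?thesis
    unfolding F main cubic quadratic M_def[symmetric] by linarith
qed

theorem proposition5p3:
  fixes \<theta> \<gamma> :: real
  assumes "\<theta> > 0"
  shows "((\<lambda>s. F_s \<theta> s (1 - \<gamma> / sqrt s)
            - (sqrt (2 / \<theta>) * mills_ratio (\<gamma> / sqrt (2 * \<theta>)) * sqrt s
               + \<gamma> ^ 3 * sqrt 2 / (3 * \<theta> powr (3/2)) * mills_ratio (\<gamma> / sqrt (2 * \<theta>))
               - \<gamma>\<^sup>2 / (3 * \<theta>) - 2 / 3))
          \<longlongrightarrow> 0) at_top"
proof -
  define c where "c = \<gamma> / sqrt \<theta>"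
  define C where "C = (1 - c\<^sup>2) / 3 + c ^ 3 / 3 * gauss_tail c"
  have "filterlim (\<lambda>s. sqrt (\<theta> / s)) (at_right 0) at_top"
    using assms by real_asymp
  from filterlim_compose[OF tendsto_integral_defect this]
  have "((\<lambda>s. integral {0..} (defect (sqrt (\<theta> / s)) c) - C) \<longlongrightarrow> 0) at_top"
    by (simp add: C_def LIM_zero)
  moreover have "eventually (\<lambda>s. integral {0..} (defect (sqrt (\<theta> / s)) c) - C
      = F_s \<theta> s (1 - \<gamma> / sqrt s)
          - (sqrt (2 / \<theta>) * mills_ratio (\<gamma> / sqrt (2 * \<theta>)) * sqrt s
             + \<gamma> ^ 3 * sqrt 2 / (3 * \<theta> powr (3/2)) * mills_ratio (\<gamma> / sqrt (2 * \<theta>))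
             - \<gamma>\<^sup>2 / (3 * \<theta>) - 2 / 3)) at_top"
    using eventually_ge_at_top[of "max 1 (\<gamma>\<^sup>2)"]
  proof eventually_elim
    case (elim s)
    then show ?case
      using F_s_remainder_eq_integral_defect[OF assms, of s \<gamma>] by (simp add: C_def c_def)
  qed
  ultimately show ?thesis
    by (rule Lim_transform_eventually)
qed

end
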